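(* Let $L\ge2$, fix an input $x\in\mathbb R^{d_0}$, and consider the $L$-layer ReLU network with parameters $\bm\theta=(W_1,b_1,\dots,W_L,b_L)$, where $W_l\in\mathbb R^{d_l\times d_{l-1}}$, $b_l\in\mathbb R^{d_l}$ for $l<L$, and $W_L\in\mathbb R^{C\times d_{L-1}}$, $b_L\in\mathbb R^C$; define $a_0(x)=x$, $a_l(x)=\sigma(W_la_{l-1}(x)+b_l)$ for $l=1,\dots,L-1$, and $F_x(\bm\theta)=W_La_{L-1}(x)+b_L$. Define $Z_1^+=\sigma(W_1x+b_1)$, $Z_1^-=0$ and, for $l=1,\dots,L-2$, $p_{l+1}=\sigma(W_{l+1})Z_l^++\sigma(-W_{l+1})Z_l^-+b_{l+1}$, $Z_{l+1}^-=\sigma(W_{l+1})Z_l^-+\sigma(-W_{l+1})Z_l^+$, $Z_{l+1}^+=\max\{p_{l+1},Z_{l+1}^-\}$, and set $A(\bm\theta)=\sigma(W_L)Z_{L-1}^++\sigma(-W_L)Z_{L-1}^-+\sigma(b_L)$, $B(\bm\theta)=\sigma(W_L)Z_{L-1}^-+\sigma(-W_L)Z_{L-1}^++\sigma(-b_L)$. Then $F_x(\bm\theta)=A(\bm\theta)-B(\bm\theta)$ for all $\bm\theta$, and for every block $\theta_l=(W_l,b_l)$, $l\in\{1,\dots,L\}$, when all other blocks are held fixed, each coordinate of $A$ and of $B$ is nonnegative and convex as a function of $\theta_l$.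
   Context: $\sigma(t)=\max\{t,0\}$ is the ReLU, applied entrywise to vectors and matrices; $\max\{\cdot,\cdot\}$ of two vectors is taken coordinatewise. *)

theory Defs
  imports "HOL-Analysis.Analysis"
begin

text \<open>Vectors in R^n are functions nat => real (only indices < n matter),
matrices are functions nat => nat => real (row, column).
Network parameters: W l, b l for layer l = 1..L; widths d 0, ..., d L with d L = C.\<close>

definition relu :: "real \<Rightarrow> real" where
  "relu t = max t 0"

definition mv :: "nat \<Rightarrow> (nat \<Rightarrow> nat \<Rightarrow> real) \<Rightarrow> (nat \<Rightarrow> real) \<Rightarrow> nat \<Rightarrow> real" where
  "mv n M v = (\<lambda>i. \<Sum>j<n. M i j * v j)"

definition relu_mat :: "(nat \<Rightarrow> nat \<Rightarrow> real) \<Rightarrow> nat \<Rightarrow> nat \<Rightarrow> real" where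
  "relu_mat M = (\<lambda>i j. relu (M i j))"

definition neg_mat :: "(nat \<Rightarrow> nat \<Rightarrow> real) \<Rightarrow> nat \<Rightarrow> nat \<Rightarrow> real" where
  "neg_mat M = (\<lambda>i j. - M i j)"

primrec act :: "(nat \<Rightarrow> nat) \<Rightarrow> (nat \<Rightarrow> nat \<Rightarrow> nat \<Rightarrow> real) \<Rightarrow> (nat \<Rightarrow> nat \<Rightarrow> real)
    \<Rightarrow> (nat \<Rightarrow> real) \<Rightarrow> nat \<Rightarrow> nat \<Rightarrow> real" where
  "act d W b x 0 = x"
| "act d W b x (Suc l) = (\<lambda>i. relu (mv (d l) (W (Suc l)) (act d W b x l) i + b (Suc l) i))"

definition net :: "nat \<Rightarrow> (nat \<Rightarrow> nat) \<Rightarrow> (nat \<Rightarrow> nat \<Rightarrow> nat \<Rightarrow> real) \<Rightarrow> (nat \<Rightarrow> nat \<Rightarrow> real)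
    \<Rightarrow> (nat \<Rightarrow> real) \<Rightarrow> nat \<Rightarrow> real" where
  "net L d W b x = (\<lambda>i. mv (d (L - 1)) (W L) (act d W b x (L - 1)) i + b L i)"

text \<open>Z l = (Z_l^+, Z_l^-) for l \<ge> 1 (the value at 0 is irrelevant).\<close>
fun Zpm :: "(nat \<Rightarrow> nat) \<Rightarrow> (nat \<Rightarrow> nat \<Rightarrow> nat \<Rightarrow> real) \<Rightarrow> (nat \<Rightarrow> nat \<Rightarrow> real)
    \<Rightarrow> (nat \<Rightarrow> real) \<Rightarrow> nat \<Rightarrow> (nat \<Rightarrow> real) \<times> (nat \<Rightarrow> real)" where
  "Zpm d W b x 0 = (x, (\<lambda>_. 0))"
| "Zpm d W b x (Suc 0) = ((\<lambda>i. relu (mv (d 0) (W 1) x i + b 1 i)), (\<lambda>_. 0))"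
| "Zpm d W b x (Suc (Suc l)) =
     (let (Zp, Zm) = Zpm d W b x (Suc l);
          n = d (Suc l);
          p = (\<lambda>i. mv n (relu_mat (W (Suc (Suc l)))) Zp i
                   + mv n (relu_mat (neg_mat (W (Suc (Suc l))))) Zm i + b (Suc (Suc l)) i);
          Zm' = (\<lambda>i. mv n (relu_mat (W (Suc (Suc l)))) Zm i
                   + mv n (relu_mat (neg_mat (W (Suc (Suc l))))) Zp i)
      in ((\<lambda>i. max (p i) (Zm' i)), Zm'))"

definition Aterm :: "nat \<Rightarrow> (nat \<Rightarrow> nat) \<Rightarrow> (nat \<Rightarrow> nat \<Rightarrow> nat \<Rightarrow> real) \<Rightarrow> (nat \<Rightarrow> nat \<Rightarrow> real)
    \<Rightarrow> (nat \<Rightarrow> real) \<Rightarrow> nat \<Rightarrow> real" where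
  "Aterm L d W b x = (let (Zp, Zm) = Zpm d W b x (L - 1); n = d (L - 1) in
     (\<lambda>i. mv n (relu_mat (W L)) Zp i + mv n (relu_mat (neg_mat (W L))) Zm i + relu (b L i)))"

definition Bterm :: "nat \<Rightarrow> (nat \<Rightarrow> nat) \<Rightarrow> (nat \<Rightarrow> nat \<Rightarrow> nat \<Rightarrow> real) \<Rightarrow> (nat \<Rightarrow> nat \<Rightarrow> real)
    \<Rightarrow> (nat \<Rightarrow> real) \<Rightarrow> nat \<Rightarrow> real" where
  "Bterm L d W b x = (let (Zp, Zm) = Zpm d W b x (L - 1); n = d (L - 1) in
     (\<lambda>i. mv n (relu_mat (W L)) Zm i + mv n (relu_mat (neg_mat (W L))) Zp i + relu (- b L i)))"

text \<open>Convexity of a real function of one parameter block theta_l = (W_l, b_l),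
 where convex combinations are taken entrywise (literal unfolding of convex_on on
 the parameter space).\<close>
definition block_convex :: "((nat \<Rightarrow> nat \<Rightarrow> real) \<Rightarrow> (nat \<Rightarrow> real) \<Rightarrow> real) \<Rightarrow> bool" where
  "block_convex f \<longleftrightarrow> (\<forall>M1 c1 M2 c2 (t::real). 0 \<le> t \<and> t \<le> 1 \<longrightarrow>
      f (\<lambda>i j. t * M1 i j + (1 - t) * M2 i j) (\<lambda>i. t * c1 i + (1 - t) * c2 i)
        \<le> t * f M1 c1 + (1 - t) * f M2 c2)"

end

theory Submission
  imports Defs
begin

(* Split every weight matrix as W = relu(W) - relu(-W). A pair (Z+, Z-) of nonnegative
   vectors standing for Z+ - Z- then passes through an affine layer as the difference of two
   nonnegative vectors, and the ReLU is absorbed by relu(p - q) = max p q - q; by induction on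
   the depth Z_l+ - Z_l- = a_l(x), and F_x = A - B follows in the same way.
   For convexity in the block theta_l: blocks after k do not enter Z_k; Z_l applies
   relu(W_l) and relu(-W_l) to the nonnegative Z_(l-1), adds b_l and takes a maximum, so it is
   convex in theta_l; every later layer combines convex coordinates with the nonnegative
   weights relu(W_k), relu(-W_k), adds a constant and takes a maximum, preserving convexity. *)

lemma relu_nonneg: "0 \<le> relu t"
  by (simp add: relu_def)

lemma relu_minus_relu_neg: "relu t - relu (- t) = t"
  by (simp add: relu_def)

lemma relu_diff_eq_max: "relu (p - q) = max p q - q"
  by (simp add: relu_def max_def)

lemma mv_relu_mat_nonneg: "(\<And>j. 0 \<le> v j) \<Longrightarrow> 0 \<le> mv n (relu_mat M) v i"
  unfolding mv_def relu_mat_def by (intro sum_nonneg) (simp add: relu_nonneg)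

definition mv_dc_plus :: "nat \<Rightarrow> (nat \<Rightarrow> nat \<Rightarrow> real) \<Rightarrow> (nat \<Rightarrow> real) \<times> (nat \<Rightarrow> real) \<Rightarrow> nat \<Rightarrow> real"
  where "mv_dc_plus n M Z = (\<lambda>i. mv n (relu_mat M) (fst Z) i + mv n (relu_mat (neg_mat M)) (snd Z) i)"

definition mv_dc_minus :: "nat \<Rightarrow> (nat \<Rightarrow> nat \<Rightarrow> real) \<Rightarrow> (nat \<Rightarrow> real) \<times> (nat \<Rightarrow> real) \<Rightarrow> nat \<Rightarrow> real"
  where "mv_dc_minus n M Z = (\<lambda>i. mv n (relu_mat M) (snd Z) i + mv n (relu_mat (neg_mat M)) (fst Z) i)"

lemma mv_diff_eq_mv_dc:
  "mv n M (\<lambda>j. fst Z j - snd Z j) i = mv_dc_plus n M Z i - mv_dc_minus n M Z i"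
proof -
  have "M i j * (fst Z j - snd Z j)
      = (relu (M i j) - relu (- M i j)) * (fst Z j - snd Z j)" for j
    by (simp add: relu_minus_relu_neg)
  also have "\<dots> j = (relu (M i j) * fst Z j + relu (- M i j) * snd Z j)
        - (relu (M i j) * snd Z j + relu (- M i j) * fst Z j)" for j
    by (simp add: algebra_simps)
  finally show ?thesis
    unfolding mv_def mv_dc_plus_def mv_dc_minus_def relu_mat_def neg_mat_def
    by (simp add: sum.distrib sum_subtractf)
qed

lemma mv_dc_nonneg:
  assumes "\<And>j. 0 \<le> fst Z j" and "\<And>j. 0 \<le> snd Z j"
  shows "0 \<le> mv_dc_plus n M Z i" and "0 \<le> mv_dc_minus n M Z i"
  unfolding mv_dc_plus_def mv_dc_minus_def
  using assms by (simp_all add: mv_relu_mat_nonneg)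

lemma fst_Zpm_Suc_Suc:
  "fst (Zpm d W b x (Suc (Suc l))) i
     = max (mv_dc_plus (d (Suc l)) (W (Suc (Suc l))) (Zpm d W b x (Suc l)) i + b (Suc (Suc l)) i)
           (mv_dc_minus (d (Suc l)) (W (Suc (Suc l))) (Zpm d W b x (Suc l)) i)"
  by (simp add: mv_dc_plus_def mv_dc_minus_def Let_def split: prod.split)

lemma snd_Zpm_Suc_Suc:
  "snd (Zpm d W b x (Suc (Suc l))) i
     = mv_dc_minus (d (Suc l)) (W (Suc (Suc l))) (Zpm d W b x (Suc l)) i"
  by (simp add: mv_dc_minus_def Let_def split: prod.split)

lemma Aterm_eq: "Aterm L d W b x i = mv_dc_plus (d (L - 1)) (W L) (Zpm d W b x (L - 1)) i + relu (b L i)"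
  by (simp add: Aterm_def mv_dc_plus_def Let_def split: prod.split)

lemma Bterm_eq: "Bterm L d W b x i = mv_dc_minus (d (L - 1)) (W L) (Zpm d W b x (L - 1)) i + relu (- b L i)"
  by (simp add: Bterm_def mv_dc_minus_def Let_def split: prod.split)

lemma act_eq_Zpm_diff: "act d W b x k i = fst (Zpm d W b x k) i - snd (Zpm d W b x k) i"
proof (induction d W b x k arbitrary: i rule: Zpm.induct)
  case (3 d W b x l)
  have "act d W b x (Suc l) = (\<lambda>j. fst (Zpm d W b x (Suc l)) j - snd (Zpm d W b x (Suc l)) j)"
    using "3.IH" by blast
  then show ?case
    by (simp add: mv_diff_eq_mv_dc fst_Zpm_Suc_Suc snd_Zpm_Suc_Suc relu_diff_eq_max[symmetric] del: Zpm.simps)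
       (simp add: algebra_simps)
qed simp_all

lemma net_eq_Aterm_minus_Bterm: "net L d W b x i = Aterm L d W b x i - Bterm L d W b x i"
proof -
  have "act d W b x (L - 1) = (\<lambda>j. fst (Zpm d W b x (L - 1)) j - snd (Zpm d W b x (L - 1)) j)"
    using act_eq_Zpm_diff by blast
  then show ?thesis
    by (simp add: net_def Aterm_eq Bterm_eq mv_diff_eq_mv_dc relu_minus_relu_neg[symmetric])
qed

lemma Zpm_fun_upd_later_block:
  "k < l \<Longrightarrow> Zpm d (W(l := M)) (b(l := c)) x k = Zpm d W b x k"
  by (induction d W b x k rule: Zpm.induct) (simp_all add: Let_def split: prod.split)

lemma Zpm_nonneg: "0 \<le> fst (Zpm d W b x (Suc k)) i \<and> 0 \<le> snd (Zpm d W b x (Suc k)) i"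
proof (induction k arbitrary: i)
  case 0
  then show ?case by (simp add: relu_nonneg)
next
  case (Suc k)
  have "0 \<le> mv_dc_minus (d (Suc k)) (W (Suc (Suc k))) (Zpm d W b x (Suc k)) i"
    using Suc.IH by (intro mv_dc_nonneg) blast+
  then show ?case
    by (simp add: fst_Zpm_Suc_Suc snd_Zpm_Suc_Suc del: Zpm.simps)
qed

lemma block_convex_const: "block_convex (\<lambda>M c. k)"
  unfolding block_convex_def by (simp add: algebra_simps)

lemma block_convex_entry: "block_convex (\<lambda>M c. a * M i j)"
  unfolding block_convex_def by (simp add: algebra_simps)

lemma block_convex_bias: "block_convex (\<lambda>M c. a * c i)"
  unfolding block_convex_def by (simp add: algebra_simps)

lemma block_convex_add:
  assumes "block_convex f" and "block_convex g"
  shows "block_convex (\<lambda>M c. f M c + g M c)"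
  unfolding block_convex_def
proof (intro allI impI)
  fix M1 M2 :: "nat \<Rightarrow> nat \<Rightarrow> real" and c1 c2 :: "nat \<Rightarrow> real" and t :: real
  assume t: "0 \<le> t \<and> t \<le> 1"
  let ?M = "\<lambda>i j. t * M1 i j + (1 - t) * M2 i j" and ?c = "\<lambda>i. t * c1 i + (1 - t) * c2 i"
  have "f ?M ?c \<le> t * f M1 c1 + (1 - t) * f M2 c2" "g ?M ?c \<le> t * g M1 c1 + (1 - t) * g M2 c2"
    using assms t unfolding block_convex_def by blast+
  then show "f ?M ?c + g ?M ?c \<le> t * (f M1 c1 + g M1 c1) + (1 - t) * (f M2 c2 + g M2 c2)"
    by (simp add: algebra_simps)
qed

lemma block_convex_scale:
  assumes "block_convex f" and "0 \<le> a"
  shows "block_convex (\<lambda>M c. a * f M c)"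
  unfolding block_convex_def
proof (intro allI impI)
  fix M1 M2 :: "nat \<Rightarrow> nat \<Rightarrow> real" and c1 c2 :: "nat \<Rightarrow> real" and t :: real
  assume t: "0 \<le> t \<and> t \<le> 1"
  let ?M = "\<lambda>i j. t * M1 i j + (1 - t) * M2 i j" and ?c = "\<lambda>i. t * c1 i + (1 - t) * c2 i"
  have "a * f ?M ?c \<le> a * (t * f M1 c1 + (1 - t) * f M2 c2)"
    using assms t unfolding block_convex_def by (blast intro: mult_left_mono)
  then show "a * f ?M ?c \<le> t * (a * f M1 c1) + (1 - t) * (a * f M2 c2)"
    by (simp add: algebra_simps)
qed

lemma block_convex_sum:
  fixes n :: nat
  assumes "\<And>j. block_convex (\<lambda>M c. f M c j)"
  shows "block_convex (\<lambda>M c. \<Sum>j<n. f M c j)"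
  by (induction n) (simp_all add: block_convex_const block_convex_add assms)

lemma block_convex_max:
  assumes "block_convex f" and "block_convex g"
  shows "block_convex (\<lambda>M c. max (f M c) (g M c))"
  unfolding block_convex_def
proof (intro allI impI)
  fix M1 M2 :: "nat \<Rightarrow> nat \<Rightarrow> real" and c1 c2 :: "nat \<Rightarrow> real" and t :: real
  assume t: "0 \<le> t \<and> t \<le> 1"
  let ?M = "\<lambda>i j. t * M1 i j + (1 - t) * M2 i j" and ?c = "\<lambda>i. t * c1 i + (1 - t) * c2 i"
  let ?h = "\<lambda>M c. max (f M c) (g M c)"
  have "t * f M1 c1 + (1 - t) * f M2 c2 \<le> t * ?h M1 c1 + (1 - t) * ?h M2 c2"
       "t * g M1 c1 + (1 - t) * g M2 c2 \<le> t * ?h M1 c1 + (1 - t) * ?h M2 c2"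
    using t by (intro add_mono mult_left_mono; simp)+
  moreover have "f ?M ?c \<le> t * f M1 c1 + (1 - t) * f M2 c2" "g ?M ?c \<le> t * g M1 c1 + (1 - t) * g M2 c2"
    using assms t unfolding block_convex_def by blast+
  ultimately show "?h ?M ?c \<le> t * ?h M1 c1 + (1 - t) * ?h M2 c2"
    by linarith
qed

lemma block_convex_relu: "block_convex f \<Longrightarrow> block_convex (\<lambda>M c. relu (f M c))"
  unfolding relu_def by (rule block_convex_max[OF _ block_convex_const])

lemma block_convex_mv_relu_mat:
  assumes "\<And>j. 0 \<le> v j"
  shows "block_convex (\<lambda>M c. mv n (relu_mat M) v i)"
    and "block_convex (\<lambda>M c. mv n (relu_mat (neg_mat M)) v i)"
proof -
  have "block_convex (\<lambda>M c. v j * relu (a * M i j))" for a j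
    using block_convex_scale[OF block_convex_relu[OF block_convex_entry] assms] .
  from this[where a = 1] this[where a = "-1"] show "block_convex (\<lambda>M c. mv n (relu_mat M) v i)"
    and "block_convex (\<lambda>M c. mv n (relu_mat (neg_mat M)) v i)"
    unfolding mv_def relu_mat_def neg_mat_def
    by (simp_all add: block_convex_sum mult.commute)
qed

lemma block_convex_mv_dc_matrix:
  assumes "\<And>j. 0 \<le> fst Z j" and "\<And>j. 0 \<le> snd Z j"
  shows "block_convex (\<lambda>M c. mv_dc_plus n M Z i)"
    and "block_convex (\<lambda>M c. mv_dc_minus n M Z i)"
  unfolding mv_dc_plus_def mv_dc_minus_def
  using assms by (simp_all add: block_convex_add block_convex_mv_relu_mat)

lemma block_convex_mv_dc_vector:
  assumes "\<And>j. block_convex (\<lambda>M c. fst (Z M c) j)"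
    and "\<And>j. block_convex (\<lambda>M c. snd (Z M c) j)"
  shows "block_convex (\<lambda>M c. mv_dc_plus n A (Z M c) i)"
    and "block_convex (\<lambda>M c. mv_dc_minus n A (Z M c) i)"
proof -
  have mv: "block_convex (\<lambda>M c. mv n (relu_mat B) (v M c) i)"
    if "\<And>j. block_convex (\<lambda>M c. v M c j)" for B and v :: "_ \<Rightarrow> _ \<Rightarrow> nat \<Rightarrow> real"
    unfolding mv_def relu_mat_def
    by (intro block_convex_sum block_convex_scale that relu_nonneg)
  show "block_convex (\<lambda>M c. mv_dc_plus n A (Z M c) i)"
    and "block_convex (\<lambda>M c. mv_dc_minus n A (Z M c) i)"
    unfolding mv_dc_plus_def mv_dc_minus_def
    by (intro block_convex_add mv assms)+
qed

lemma Zpm_block_convex_own_layer: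
  assumes "1 \<le> l"
  shows "block_convex (\<lambda>M c. fst (Zpm d (W(l := M)) (b(l := c)) x l) i)
       \<and> block_convex (\<lambda>M c. snd (Zpm d (W(l := M)) (b(l := c)) x l) i)"
proof (cases l)
  case 0
  with assms show ?thesis by simp
next
  case (Suc k)
  show ?thesis
  proof (cases k)
    case 0
    have "block_convex (\<lambda>M c. mv (d 0) M x i)"
      unfolding mv_def by (simp add: block_convex_sum block_convex_entry mult.commute)
    then show ?thesis
      using \<open>l = Suc k\<close> 0
      by (simp add: block_convex_relu block_convex_add block_convex_bias[where a = 1, simplified]
          block_convex_const)
  next
    case (Suc m)
    with \<open>l = Suc k\<close> have l: "l = Suc (Suc m)" by simp
    define Z where "Z = Zpm d W b x (Suc m)"
    have Z: "Zpm d (W(Suc (Suc m) := M)) (b(Suc (Suc m) := c)) x (Suc m) = Z" for M c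
      unfolding Z_def by (simp add: Zpm_fun_upd_later_block)
    have "0 \<le> fst Z j" "0 \<le> snd Z j" for j
      unfolding Z_def using Zpm_nonneg by blast+
    note dc = block_convex_mv_dc_matrix[of Z, OF this]
    show ?thesis
      unfolding l fst_Zpm_Suc_Suc snd_Zpm_Suc_Suc fun_upd_same Z
      by (intro conjI block_convex_max block_convex_add dc block_convex_bias[where a = 1, simplified])
  qed
qed

lemma Zpm_block_convex:
  assumes "1 \<le> l" and "l \<le> k"
  shows "block_convex (\<lambda>M c. fst (Zpm d (W(l := M)) (b(l := c)) x k) i)
       \<and> block_convex (\<lambda>M c. snd (Zpm d (W(l := M)) (b(l := c)) x k) i)"
  using assms(2)
proof (induction k arbitrary: i rule: dec_induct)
  case base
  show ?case using Zpm_block_convex_own_layer[OF assms(1)] .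
next
  case (step k)
  then obtain m where k: "k = Suc m" using assms(1) by (cases k) auto
  have upd: "(W(l := M)) (Suc (Suc m)) = W (Suc (Suc m))" "(b(l := c)) (Suc (Suc m)) = b (Suc (Suc m))"
    for M c using step.hyps k by auto
  have "block_convex (\<lambda>M c. fst (Zpm d (W(l := M)) (b(l := c)) x (Suc m)) j)"
    and "block_convex (\<lambda>M c. snd (Zpm d (W(l := M)) (b(l := c)) x (Suc m)) j)" for j
    using step.IH k by blast+
  note dc = block_convex_mv_dc_vector[OF this, of "d (Suc m)" "W (Suc (Suc m))" i]
  show ?case
    unfolding k fst_Zpm_Suc_Suc snd_Zpm_Suc_Suc upd
    by (intro conjI block_convex_max block_convex_add block_convex_const dc)
qed

lemma Zpm_nonneg_last_hidden:
  assumes "2 \<le> L"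
  shows "0 \<le> fst (Zpm d W b x (L - 1)) j" and "0 \<le> snd (Zpm d W b x (L - 1)) j"
proof -
  have "L - 1 = Suc (L - 2)" using assms by simp
  then show "0 \<le> fst (Zpm d W b x (L - 1)) j" and "0 \<le> snd (Zpm d W b x (L - 1)) j"
    using Zpm_nonneg by presburger+
qed

lemma Aterm_Bterm_nonneg:
  assumes "2 \<le> L"
  shows "0 \<le> Aterm L d W b x i" and "0 \<le> Bterm L d W b x i"
  unfolding Aterm_eq Bterm_eq
  using Zpm_nonneg_last_hidden[OF assms] by (simp_all add: mv_dc_nonneg relu_nonneg)

lemma Aterm_Bterm_block_convex:
  assumes "2 \<le> L" and "l \<in> {1..L}"
  shows "block_convex (\<lambda>M c. Aterm L d (W(l := M)) (b(l := c)) x i)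
       \<and> block_convex (\<lambda>M c. Bterm L d (W(l := M)) (b(l := c)) x i)"
proof (cases "l = L")
  case True
  have Z: "Zpm d (W(l := M)) (b(l := c)) x (L - 1) = Zpm d W b x (L - 1)" for M c
    unfolding True using assms(1) by (simp add: Zpm_fun_upd_later_block)
  note dc = block_convex_mv_dc_matrix[OF Zpm_nonneg_last_hidden[OF assms(1)], where n = "d (L - 1)" and i = i]
  have "block_convex (\<lambda>M c. relu (c i))" "block_convex (\<lambda>M c. relu (- c i))"
    using block_convex_relu[OF block_convex_bias[where a = 1]]
      block_convex_relu[OF block_convex_bias[where a = "-1"]] by simp_all
  then show ?thesis
    unfolding Aterm_eq Bterm_eq Z using True dc by (simp add: block_convex_add)
next
  case False
  with assms(2) have "1 \<le> l" "l \<le> L - 1" by auto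
  note IH = Zpm_block_convex[OF this]
  have "block_convex (\<lambda>M c. fst (Zpm d (W(l := M)) (b(l := c)) x (L - 1)) j)"
    and "block_convex (\<lambda>M c. snd (Zpm d (W(l := M)) (b(l := c)) x (L - 1)) j)" for j
    using IH by blast+
  note dc = block_convex_mv_dc_vector[OF this, of "d (L - 1)" "W L" i]
  show ?thesis
    unfolding Aterm_eq Bterm_eq using False dc by (simp add: block_convex_add block_convex_const)
qed

theorem theorem3p3:
  fixes L :: nat and d :: "nat \<Rightarrow> nat" and x :: "nat \<Rightarrow> real"
  assumes "L \<ge> 2"
  shows "(\<forall>W b. \<forall>i < d L. net L d W b x i = Aterm L d W b x i - Bterm L d W b x i)
    \<and> (\<forall>W b. \<forall>l \<in> {1..L}. \<forall>i < d L.
          (\<forall>M c. 0 \<le> Aterm L d (W(l := M)) (b(l := c)) x i)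
        \<and> (\<forall>M c. 0 \<le> Bterm L d (W(l := M)) (b(l := c)) x i)
        \<and> block_convex (\<lambda>M c. Aterm L d (W(l := M)) (b(l := c)) x i)
        \<and> block_convex (\<lambda>M c. Bterm L d (W(l := M)) (b(l := c)) x i))"
  using assms
  by (intro conjI allI impI ballI)
     (simp_all add: net_eq_Aterm_minus_Bterm Aterm_Bterm_nonneg Aterm_Bterm_block_convex)

end
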